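(* Let $K$ and $S$ be compact Hausdorff spaces and let $T\colon C(K)\to C(S)$ be a U-embedding. Let $F_T\colon S\to C(K)^*$ be $F_T(s)=T^*(\delta_s)$ and let $A_0:=F_T^{-1}(\{\pm\delta_k: k\in K\})\subset S$ (a homeomorphic copy of $K$ inside $S$). Then $A_0$ is a zero-set of $S$, and hence a $G_\delta$-subset of $S$.
   Context: $C(K)$, $C(S)$ carry the sup norm; $C(K)^*$ is identified with regular Borel signed measures, $\delta_k$ the Dirac measure at $k$; $\{\pm\delta_k:k\in K\}$ is the set of extreme points of the unit ball of $C(K)^*$, so $A_0$ is the U-core of $T$. A linear isometry $T\colon X\to Y$ is a U-embedding if every $x^*\in X^*$ has a unique $y^*\in Y^*$ with $T^*(y^* )=x^*$ and $\|y^*\|=\|x^*\|$. A zero-set of $S$ is a set of the form $\{t\in S:f(t)=0\}$ with $f\in C(S)$. *)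

theory Defs
  imports "HOL-Analysis.Analysis"
begin

(* C(K) is modelled by the Banach space of bounded continuous real functions
  (bcontfun type, sup norm); for compact K this is exactly C(K). *)

definition dirac :: "'a::topological_space \<Rightarrow> (('a \<Rightarrow>\<^sub>C real) \<Rightarrow>\<^sub>L real)" where
  "dirac k = Blinfun (\<lambda>f. apply_bcontfun f k)"

definition adjoint_op ::
  "('a \<Rightarrow>\<^sub>L 'b::real_normed_vector) \<Rightarrow> ('b \<Rightarrow>\<^sub>L real) \<Rightarrow> ('a::real_normed_vector \<Rightarrow>\<^sub>L real)" where
  "adjoint_op T y = y o\<^sub>L T"

definition linear_isometry :: "('a::real_normed_vector \<Rightarrow>\<^sub>L 'b::real_normed_vector) \<Rightarrow> bool" where
  "linear_isometry T \<longleftrightarrow> (\<forall>x. norm (blinfun_apply T x) = norm x)"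

definition U_embedding :: "('a::real_normed_vector \<Rightarrow>\<^sub>L 'b::real_normed_vector) \<Rightarrow> bool" where
  "U_embedding T \<longleftrightarrow> linear_isometry T \<and>
     (\<forall>x :: 'a \<Rightarrow>\<^sub>L real. \<exists>!y :: 'b \<Rightarrow>\<^sub>L real. adjoint_op T y = x \<and> norm y = norm x)"

definition F_T :: "(('k::topological_space \<Rightarrow>\<^sub>C real) \<Rightarrow>\<^sub>L ('s::topological_space \<Rightarrow>\<^sub>C real))
     \<Rightarrow> 's \<Rightarrow> (('k \<Rightarrow>\<^sub>C real) \<Rightarrow>\<^sub>L real)" where
  "F_T T s = adjoint_op T (dirac s)"

definition U_core :: "(('k::topological_space \<Rightarrow>\<^sub>C real) \<Rightarrow>\<^sub>L ('s::topological_space \<Rightarrow>\<^sub>C real))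
     \<Rightarrow> 's set" where
  "U_core T = {s. \<exists>k::'k. F_T T s = dirac k \<or> F_T T s = - dirac k}"

definition zero_set :: "'a::topological_space set \<Rightarrow> bool" where
  "zero_set A \<longleftrightarrow> (\<exists>f :: 'a \<Rightarrow> real. continuous_on UNIV f \<and> A = {t. f t = 0})"

end

theory Submission
  imports Defs
begin

(* For every k in K there is a point s in S with T^*(delta_s) = +-delta_k (Holsztynski's
  argument): if f peaks at k and |Tf| attains its maximum 1 at s, then Tu(s) = 0 for every u
  dominated by a nonnegative continuous h with h(k) = 0, and compactness of S makes these
  constraints simultaneously satisfiable.  For a U-embedding this point sigma(k) is unique, since
  +-delta_s is a norm-preserving preimage of delta_k; the graph of sigma is closed, so sigma is
  continuous and A_0 = sigma(K) is closed.  The weighted composition L g = T1(sigma) * g(sigma) is a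
  left inverse of T of norm at most 1 that ignores S - A_0.  If ||F_T(p)|| = 1, then delta_p and
  F_T(p) o L are both norm-preserving extensions of F_T(p), hence equal, which forces p into A_0.
  So A_0 = {s. ||F_T(s)|| >= 1}, a G_delta since the norm of F_T is lower semicontinuous, and a
  closed G_delta of a normal space is a zero set. *)

section \<open>Evaluation functionals on bounded continuous functions\<close>

lemma apply_Bcontfun_bounded:
  fixes f :: "'a::topological_space \<Rightarrow> 'b::real_normed_vector"
  assumes "continuous_on UNIV f" "\<And>x. norm (f x) \<le> b"
  shows "apply_bcontfun (Bcontfun f) = f"
  using bcontfun_normI[OF assms] by (rule Bcontfun_inverse)

lemma norm_const_bcontfun [simp]:
  "norm (const_bcontfun c :: 'a::topological_space \<Rightarrow>\<^sub>C 'b::real_normed_vector) = norm c"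
proof (rule antisym)
  show "norm (const_bcontfun c :: 'a \<Rightarrow>\<^sub>C 'b) \<le> norm c"
    by (rule norm_bound) simp
  show "norm c \<le> norm (const_bcontfun c :: 'a \<Rightarrow>\<^sub>C 'b)"
    using norm_bounded[of "const_bcontfun c :: 'a \<Rightarrow>\<^sub>C 'b" undefined] by simp
qed

lemma continuous_on_apply_bcontfun_comp [continuous_intros]:
  "continuous_on S h \<Longrightarrow> continuous_on S (\<lambda>z. apply_bcontfun f (h z))"
  by (rule continuous_on_compose2[OF continuous_on_apply_bcontfun]) auto

lemma bcontfun_attains_norm:
  fixes u :: "'a::topological_space \<Rightarrow>\<^sub>C real"
  assumes "compact (UNIV::'a set)"
  obtains s where "\<bar>u s\<bar> = norm u"
proof -
  obtain s where s: "\<And>t. \<bar>u t\<bar> \<le> \<bar>u s\<bar>"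
    using continuous_attains_sup[OF assms, of "\<lambda>t. \<bar>u t\<bar>"]
    by (fastforce intro: continuous_intros)
  have "norm u \<le> \<bar>u s\<bar>" by (rule norm_bound) (simp add: s)
  with norm_bounded[of u s] show ?thesis by (intro that) simp
qed

lemma bounded_linear_apply_bcontfun:
  "bounded_linear (\<lambda>f::'a::topological_space \<Rightarrow>\<^sub>C 'b::real_normed_vector. f k)"
  by (rule bounded_linear_intro[where K=1]) (auto intro: norm_bounded)

lemma dirac_apply [simp]: "dirac k f = f k"
  unfolding dirac_def by (simp add: bounded_linear_Blinfun_apply[OF bounded_linear_apply_bcontfun])

lemma norm_dirac [simp]: "norm (dirac k) = 1"
proof (rule antisym)
  show "norm (dirac k) \<le> 1"
    by (rule norm_blinfun_bound) (simp_all, metis norm_bounded real_norm_def)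
  show "1 \<le> norm (dirac k)"
    using norm_blinfun[of "dirac k" "const_bcontfun 1"] by simp
qed

section \<open>Zero sets and G-delta sets\<close>

lemma open_norm_gt_blinfun:
  fixes F :: "'a::topological_space \<Rightarrow> 'b::real_normed_vector \<Rightarrow>\<^sub>L 'c::real_normed_vector"
  assumes "\<And>x. continuous_on UNIV (\<lambda>s. F s x)"
  shows "open {s. c < norm (F s)}"
proof -
  have "c < norm (F s) \<longleftrightarrow> (\<exists>x. c < norm (F s x) / norm x)" for s
    unfolding norm_blinfun.rep_eq onorm_def
    by (subst less_cSUP_iff) (auto intro!: le_onorm blinfun.bounded_linear_right)
  then have "{s. c < norm (F s)} = (\<Union>x. {s. c < norm (F s x) / norm x})"
    by blast
  moreover have "open {s. c < norm (F s x) / norm x}" for x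
    unfolding divide_inverse
    by (intro open_Collect_less continuous_on_const continuous_on_mult_right continuous_on_norm assms)
  ultimately show ?thesis by auto
qed

lemma gdelta_norm_ge_blinfun:
  fixes F :: "'a::topological_space \<Rightarrow> 'b::real_normed_vector \<Rightarrow>\<^sub>L 'c::real_normed_vector"
  assumes "\<And>x. continuous_on UNIV (\<lambda>s. F s x)"
  shows "gdelta_in euclidean {s. c \<le> norm (F s)}"
proof -
  have eq: "{s. c \<le> norm (F s)} = (\<Inter>n. {s. c - inverse (Suc n) < norm (F s)})"
  proof (intro set_eqI iffI)
    fix s assume "s \<in> (\<Inter>n. {s. c - inverse (Suc n) < norm (F s)})"
    then have "c - inverse (Suc n) < norm (F s)" for n by blast
    show "s \<in> {s. c \<le> norm (F s)}"
    proof (rule ccontr)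
      assume "s \<notin> {s. c \<le> norm (F s)}"
      then obtain n where "inverse (Suc n) < c - norm (F s)"
        using reals_Archimedean[of "c - norm (F s)"] by auto
      with \<open>c - inverse (Suc n) < norm (F s)\<close> show False by simp
    qed
  next
    fix s assume "s \<in> {s. c \<le> norm (F s)}"
    moreover have "0 < inverse (real (Suc n))" for n by simp
    ultimately show "s \<in> (\<Inter>n. {s. c - inverse (Suc n) < norm (F s)})"
      by (auto intro: order.strict_trans2[rotated])
  qed
  show ?thesis
    unfolding eq
    by (rule gdelta_in_Inter) (auto simp: open_imp_gdelta_in open_norm_gt_blinfun[OF assms])
qed

lemma normal_space_compact_t2:
  assumes "compact (UNIV::'a::t2_space set)"
  shows "normal_space (euclidean::'a topology)"
proof (rule compact_Hausdorff_or_regular_imp_normal_space)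
  show "compact_space (euclidean::'a topology)"
    using assms by (simp add: compact_space_def)
  show "Hausdorff_space (euclidean::'a topology) \<or> regular_space (euclidean::'a topology)"
    by (auto simp: Hausdorff_space_def disjnt_def separation_t2)
qed

lemma normal_space_Urysohn_function:
  fixes A B :: "'a::topological_space set"
  assumes "normal_space (euclidean::'a topology)" "closed A" "closed B" "A \<inter> B = {}"
  obtains f :: "'a \<Rightarrow> real" where "continuous_on UNIV f" "\<And>x. f x \<in> {0..1}"
    "\<And>x. x \<in> A \<Longrightarrow> f x = 0" "\<And>x. x \<in> B \<Longrightarrow> f x = 1"
proof -
  obtain f where f: "continuous_map euclidean (top_of_set {0..1::real}) f" "f ` A \<subseteq> {0}" "f ` B \<subseteq> {1}"
    using Urysohn_lemma[OF assms(1), of A B 0 1] assms(2-4) by (auto simp: disjnt_def)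
  then have "continuous_on UNIV f" "\<And>x. f x \<in> {0..1}"
    by (auto simp: continuous_map_in_subtopology)
  then show ?thesis
    by (rule that) (use f(2,3) in auto)
qed

lemma zero_set_INT:
  fixes Z :: "nat \<Rightarrow> 'a::topological_space set"
  assumes "\<And>n::nat. zero_set (Z n)"
  shows "zero_set (\<Inter>n. Z n)"
proof -
  obtain f :: "nat \<Rightarrow> 'a \<Rightarrow> real"
    where f: "\<And>n. continuous_on UNIV (f n)" "\<And>n. Z n = {t. f n t = 0}"
    using assms unfolding zero_set_def by metis
  define g where "g n t = (1/2) ^ n * min 1 \<bar>f n t\<bar>" for n t
  have g_nonneg: "0 \<le> g n t" and g_le: "norm (g n t) \<le> (1/2) ^ n" for n t
    by (auto simp: g_def abs_mult)
  have geometric: "summable (\<lambda>n. (1/2::real) ^ n)"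
    by (rule summable_geometric) simp
  have "uniform_limit UNIV (\<lambda>n t. \<Sum>i<n. g i t) (\<lambda>t. \<Sum>i. g i t) sequentially"
    by (rule Weierstrass_m_test[OF _ geometric]) (use g_le in auto)
  then have "continuous_on UNIV (\<lambda>t. \<Sum>i. g i t)"
    by (rule uniform_limit_theorem[rotated])
      (auto intro!: always_eventually continuous_intros f(1) simp: g_def)
  moreover have "(\<Sum>i. g i t) = 0 \<longleftrightarrow> (\<forall>i. g i t = 0)" for t
    by (intro suminf_eq_zero_iff summable_comparison_test'[OF geometric] g_nonneg)
      (use g_le in auto)
  then have "(\<Inter>n. Z n) = {t. (\<Sum>i. g i t) = 0}"
    by (auto simp: f(2) g_def min_def split: if_splits)
  ultimately show ?thesis
    unfolding zero_set_def by blast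
qed

lemma normal_space_zero_set_between:
  fixes A U :: "'a::topological_space set"
  assumes "normal_space (euclidean::'a topology)" "closed A" "open U" "A \<subseteq> U"
  obtains Z where "zero_set Z" "A \<subseteq> Z" "Z \<subseteq> U"
proof -
  have "closed (- U)" "A \<inter> - U = {}"
    using assms(3,4) by auto
  then obtain f :: "'a \<Rightarrow> real" where f: "continuous_on UNIV f"
    "\<And>x. x \<in> A \<Longrightarrow> f x = 0" "\<And>x. x \<in> - U \<Longrightarrow> f x = 1"
    using normal_space_Urysohn_function[OF assms(1,2)] by metis
  show ?thesis
    by (rule that[of "{x. f x = 0}"]) (use f in \<open>force simp: zero_set_def\<close>)+
qed

lemma closed_gdelta_imp_zero_set:
  fixes A :: "'a::topological_space set"
  assumes normal: "normal_space (euclidean::'a topology)"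
    and "closed A" and "gdelta_in euclidean A"
  shows "zero_set A"
proof -
  obtain \<U> where \<U>: "countable \<U>" "\<And>U. U \<in> \<U> \<Longrightarrow> open U" "A = \<Inter>\<U>"
    using assms(3) by (auto simp: gdelta_in_alt intersection_of_def)
  define U where "U = from_nat_into (insert UNIV \<U>)"
  have range_U: "range U = insert UNIV \<U>"
    unfolding U_def by (rule range_from_nat_into) (use \<U>(1) in auto)
  have "\<forall>n. \<exists>Z. zero_set Z \<and> A \<subseteq> Z \<and> Z \<subseteq> U n"
  proof
    fix n
    have "U n \<in> insert UNIV \<U>"
      using range_U by blast
    then have "open (U n)" "A \<subseteq> U n"
      using \<U>(2,3) by auto
    then obtain Z where "zero_set Z" "A \<subseteq> Z" "Z \<subseteq> U n"
      using normal_space_zero_set_between[OF normal \<open>closed A\<close>] by blast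
    then show "\<exists>Z. zero_set Z \<and> A \<subseteq> Z \<and> Z \<subseteq> U n"
      by blast
  qed
  then obtain Z where Z: "\<And>n. zero_set (Z n)" "\<And>n. A \<subseteq> Z n" "\<And>n. Z n \<subseteq> U n"
    by metis
  have "A = (\<Inter>n. Z n)"
  proof
    have "(\<Inter>n. Z n) \<subseteq> \<Inter>(range U)"
      using Z(3) by blast
    then show "(\<Inter>n. Z n) \<subseteq> A"
      by (simp add: range_U \<U>(3))
  qed (use Z(2) in blast)
  then show ?thesis
    using zero_set_INT[OF Z(1)] by simp
qed

lemma compact_t2_separating_bcontfun:
  fixes A :: "'a::t2_space set"
  assumes "compact (UNIV::'a set)" "closed A" "p \<notin> A"
  obtains g :: "'a \<Rightarrow>\<^sub>C real" where "g p = 1" "\<And>x. x \<in> A \<Longrightarrow> g x = 0"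
proof -
  obtain f :: "'a \<Rightarrow> real" where f: "continuous_on UNIV f" "\<And>x. f x \<in> {0..1}"
    "\<And>x. x \<in> A \<Longrightarrow> f x = 0" "\<And>x. x \<in> {p} \<Longrightarrow> f x = 1"
    using normal_space_Urysohn_function[OF normal_space_compact_t2[OF assms(1)] assms(2), of "{p}"]
      assms(3) by blast
  have "apply_bcontfun (Bcontfun f) = f"
    by (rule apply_Bcontfun_bounded[OF f(1), of 1]) (use f(2) in auto)
  with f(3,4) show ?thesis
    by (intro that[of "Bcontfun f"]) auto
qed

lemma scaleR_dirac_eq_imp_eq:
  fixes s s' :: "'a::t2_space"
  assumes "compact (UNIV::'a set)" "c *\<^sub>R dirac s = c' *\<^sub>R dirac s'" "c \<noteq> 0"
  shows "s = s'"
proof (rule ccontr)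
  assume "s \<noteq> s'"
  then obtain g :: "'a \<Rightarrow>\<^sub>C real" where "g s = 1" "g s' = 0"
    using compact_t2_separating_bcontfun[OF assms(1), of "{s'}" s] by auto
  with arg_cong[OF assms(2), of "\<lambda>y. y g"] assms(3) show False
    by (simp add: blinfun.scaleR_left)
qed

section \<open>Holsztynski's theorem for linear isometries of C(K)\<close>

lemma linear_isometry_apply_le:
  fixes T :: "('a::topological_space \<Rightarrow>\<^sub>C real) \<Rightarrow>\<^sub>L ('b::topological_space \<Rightarrow>\<^sub>C real)"
  assumes "linear_isometry T"
  shows "\<bar>T g s\<bar> \<le> norm g"
  using norm_bounded[of "T g" s] assms unfolding linear_isometry_def by simp

lemma linear_isometry_peak_annihilates:
  fixes T :: "('a::topological_space \<Rightarrow>\<^sub>C real) \<Rightarrow>\<^sub>L ('b::topological_space \<Rightarrow>\<^sub>C real)"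
    and f u :: "'a \<Rightarrow>\<^sub>C real"
  assumes iso: "linear_isometry T" and peak: "\<bar>T f s\<bar> = 1"
    and "0 < e" and room: "\<And>x. \<bar>f x\<bar> + e * \<bar>u x\<bar> \<le> 1"
  shows "T u s = 0"
proof -
  have "\<bar>f x + e * u x\<bar> \<le> 1" "\<bar>f x - e * u x\<bar> \<le> 1" for x
    using room[of x] abs_triangle_ineq[of "f x" "e * u x"] abs_triangle_ineq4[of "f x" "e * u x"]
      \<open>0 < e\<close> by (simp_all add: abs_mult)
  then have "norm (f + e *\<^sub>R u) \<le> 1" "norm (f - e *\<^sub>R u) \<le> 1"
    by (auto intro!: norm_bound)
  then have "\<bar>T f s + e * T u s\<bar> \<le> 1" "\<bar>T f s - e * T u s\<bar> \<le> 1"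
    using linear_isometry_apply_le[OF iso, of "f + e *\<^sub>R u" s]
      linear_isometry_apply_le[OF iso, of "f - e *\<^sub>R u" s]
    by (simp_all add: blinfun.add_right blinfun.diff_right blinfun.scaleR_right)
  with peak have "e * T u s = 0"
    by (auto simp: abs_le_iff abs_if split: if_splits)
  with \<open>0 < e\<close> show ?thesis
    by simp
qed

lemma linear_isometry_annihilating_point:
  fixes T :: "('a::topological_space \<Rightarrow>\<^sub>C real) \<Rightarrow>\<^sub>L ('b::topological_space \<Rightarrow>\<^sub>C real)"
  assumes cS: "compact (UNIV::'b set)" and iso: "linear_isometry T"
    and h: "continuous_on UNIV h" "\<And>x. 0 \<le> h x" "h k = 0"
  shows "\<exists>s. \<bar>T (const_bcontfun 1) s\<bar> = 1 \<and>
    (\<forall>u. (\<forall>x. \<bar>(u :: 'a \<Rightarrow>\<^sub>C real) x\<bar> \<le> h x) \<longrightarrow> T u s = 0)"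
proof -
  define f where "f = Bcontfun (\<lambda>x. max 0 (1 - h x))"
  have f_apply: "f x = max 0 (1 - h x)" for x
    unfolding f_def using h(2)
    by (subst apply_Bcontfun_bounded[of _ 1]) (auto intro!: continuous_intros h(1))
  have "norm f = 1"
  proof (rule antisym)
    show "norm f \<le> 1"
      by (rule norm_bound) (use h(2) in \<open>simp add: f_apply\<close>)
    show "1 \<le> norm f"
      using norm_bounded[of f k] h(3) by (simp add: f_apply)
  qed
  then obtain s where s: "\<bar>T f s\<bar> = 1"
    using bcontfun_attains_norm[OF cS, of "T f"] iso by (metis linear_isometry_def)
  have annihilates: "T u s = 0" if u: "\<And>x. \<bar>u x\<bar> \<le> h x" for u :: "'a \<Rightarrow>\<^sub>C real"
  proof (rule linear_isometry_peak_annihilates[OF iso s])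
    define c where "c = max 1 (norm u)"
    have c: "1 \<le> c" "norm u \<le> c"
      by (simp_all add: c_def)
    then show "0 < inverse c"
      by simp
    show "\<bar>f x\<bar> + inverse c * \<bar>u x\<bar> \<le> 1" for x
    proof -
      have "inverse c * \<bar>u x\<bar> \<le> \<bar>u x\<bar>"
        using c(1) by (intro mult_left_le_one_le) (auto simp: inverse_le_1_iff)
      moreover have "inverse c * \<bar>u x\<bar> \<le> 1"
        using norm_bounded[of u x] c by (simp add: field_simps)
      ultimately show ?thesis
        using u[of x] h(2)[of x]
        by (auto simp: f_apply)
    qed
  qed
  have "T (const_bcontfun 1 - f) s = 0"
    by (rule linear_isometry_peak_annihilates[OF iso s, of 1]) (use h(2) in \<open>simp_all add: f_apply\<close>)
  then have "\<bar>T (const_bcontfun 1) s\<bar> = 1"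
    using s by (simp add: blinfun.diff_right)
  with annihilates show ?thesis
    by blast
qed

lemma linear_isometry_weighted_point:
  fixes T :: "('a::topological_space \<Rightarrow>\<^sub>C real) \<Rightarrow>\<^sub>L ('b::topological_space \<Rightarrow>\<^sub>C real)"
  assumes cS: "compact (UNIV::'b set)" and iso: "linear_isometry T"
  obtains s where "\<bar>T (const_bcontfun 1) s\<bar> = 1" "\<And>g. T g s = T (const_bcontfun 1) s * g k"
proof -
  define C where "C g = {s. \<bar>T (const_bcontfun 1) s\<bar> = 1 \<and> T g s = 0}" for g
  have "UNIV \<inter> \<Inter>(C ` {g :: 'a \<Rightarrow>\<^sub>C real. g k = 0}) \<noteq> {}"
  proof (rule compact_imp_fip_image[OF cS])
    show "closed (C g)" for g
      unfolding C_def by (intro closed_Collect_conj closed_Collect_eq continuous_intros)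
  next
    fix G :: "('a \<Rightarrow>\<^sub>C real) set"
    assume G: "finite G" "G \<subseteq> {g :: 'a \<Rightarrow>\<^sub>C real. g k = 0}"
    define h where "h x = (\<Sum>g\<in>G. \<bar>apply_bcontfun g x\<bar>)" for x
    have "continuous_on UNIV h"
      unfolding h_def by (intro continuous_intros)
    moreover have "0 \<le> h x" for x
      unfolding h_def by (simp add: sum_nonneg)
    moreover have "h k = 0"
      unfolding h_def using G(2) by (simp add: subset_iff)
    ultimately obtain s where s: "\<bar>T (const_bcontfun 1) s\<bar> = 1"
      and annihilates: "\<forall>u. (\<forall>x. \<bar>(u :: 'a \<Rightarrow>\<^sub>C real) x\<bar> \<le> h x) \<longrightarrow> T u s = 0"
      using linear_isometry_annihilating_point[OF cS iso] by blast
    have "s \<in> C g" if "g \<in> G" for g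
    proof -
      have "\<bar>g x\<bar> \<le> h x" for x
        unfolding h_def by (rule member_le_sum) (use G(1) that in simp_all)
      then have "T g s = 0"
        using annihilates by blast
      with s show ?thesis
        by (simp add: C_def)
    qed
    then show "UNIV \<inter> \<Inter>(C ` G) \<noteq> {}"
      by blast
  qed
  then obtain s where s: "s \<in> C g" if "g k = 0" for g :: "'a \<Rightarrow>\<^sub>C real"
    by blast
  have "\<bar>T (const_bcontfun 1) s\<bar> = 1"
    using s[of 0] by (simp add: C_def)
  moreover have "T g s = T (const_bcontfun 1) s * g k" for g :: "'a \<Rightarrow>\<^sub>C real"
  proof -
    have "T (g - g k *\<^sub>R const_bcontfun 1) s = 0"
      using s[of "g - g k *\<^sub>R const_bcontfun 1"] by (simp add: C_def)
    then show ?thesis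
      by (simp add: blinfun.diff_right blinfun.scaleR_right algebra_simps)
  qed
  ultimately show ?thesis
    by (rule that)
qed

section \<open>The U-core of a U-embedding\<close>

lemma adjoint_op_scaleR: "adjoint_op T (c *\<^sub>R y) = c *\<^sub>R adjoint_op T y"
  by (rule blinfun_eqI) (simp add: adjoint_op_def blinfun.scaleR_left)

lemma norm_linear_isometry_le: "linear_isometry T \<Longrightarrow> norm T \<le> 1"
  unfolding linear_isometry_def by (intro norm_blinfun_bound) auto

lemma norm_adjoint_op_le:
  assumes "linear_isometry T"
  shows "norm (adjoint_op T y) \<le> norm y"
proof -
  have "norm (adjoint_op T y) \<le> norm y * norm T"
    unfolding adjoint_op_def by (rule norm_blinfun_compose)
  also have "\<dots> \<le> norm y"
    using mult_left_le[OF norm_linear_isometry_le[OF assms] norm_ge_zero] .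
  finally show ?thesis .
qed

lemma U_embedding_unique_norm_preserving_preimage:
  assumes "U_embedding T" "adjoint_op T y = adjoint_op T y'"
    and "norm y = norm (adjoint_op T y)" "norm y' = norm (adjoint_op T y)"
  shows "y = y'"
  using assms unfolding U_embedding_def by metis

lemma U_embedding_eq_compose_left_inverse:
  fixes T :: "'a::real_normed_vector \<Rightarrow>\<^sub>L 'b::real_normed_vector" and L :: "'b \<Rightarrow>\<^sub>L 'a"
  assumes U: "U_embedding T" and LT: "\<And>x. L (T x) = x" and "norm L \<le> 1"
    and "norm y = norm (adjoint_op T y)"
  shows "y = adjoint_op T y o\<^sub>L L"
proof (rule U_embedding_unique_norm_preserving_preimage[OF U])
  let ?x = "adjoint_op T y"
  show adj: "adjoint_op T y = adjoint_op T (?x o\<^sub>L L)"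
    by (rule blinfun_eqI) (simp add: adjoint_op_def LT)
  have "norm (?x o\<^sub>L L) \<le> norm ?x"
    using norm_blinfun_compose[of ?x L] mult_left_le[OF \<open>norm L \<le> 1\<close> norm_ge_zero]
    by (rule order_trans)
  moreover have "norm ?x \<le> norm (?x o\<^sub>L L)"
    using adj norm_adjoint_op_le[of T "?x o\<^sub>L L"] U by (simp add: U_embedding_def)
  ultimately show "norm (?x o\<^sub>L L) = norm ?x"
    by simp
qed fact

lemma F_T_apply [simp]: "F_T T s g = T g s"
  by (simp add: F_T_def adjoint_op_def)

lemma F_T_eq_scaleR_dirac_iff: "F_T T s = c *\<^sub>R dirac k \<longleftrightarrow> (\<forall>g. T g s = c * g k)"
proof
  assume "F_T T s = c *\<^sub>R dirac k"
  then show "\<forall>g. T g s = c * g k"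
    by (metis F_T_apply blinfun.scaleR_left dirac_apply real_scaleR_def)
next
  assume "\<forall>g. T g s = c * g k"
  then show "F_T T s = c *\<^sub>R dirac k"
    by (intro blinfun_eqI) (simp add: blinfun.scaleR_left)
qed

lemma F_T_eq_pm_dirac_iff:
  "(F_T T s = dirac k \<or> F_T T s = - dirac k) \<longleftrightarrow>
    \<bar>T (const_bcontfun 1) s\<bar> = 1 \<and> (\<forall>g. T g s = T (const_bcontfun 1) s * g k)"
    (is "?pm \<longleftrightarrow> ?weighted")
proof -
  have "?pm \<longleftrightarrow> (\<exists>c. (c = 1 \<or> c = -1) \<and> F_T T s = c *\<^sub>R dirac k)"
    by auto
  also have "\<dots> \<longleftrightarrow> (\<exists>c. (c = 1 \<or> c = -1) \<and> (\<forall>g. T g s = c * g k))"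
    by (simp only: F_T_eq_scaleR_dirac_iff)
  also have "\<dots> \<longleftrightarrow> ?weighted"
  proof
    assume "\<exists>c. (c = 1 \<or> c = -1) \<and> (\<forall>g. T g s = c * g k)"
    then obtain c where "c = 1 \<or> c = -1" "\<And>g. T g s = c * g k"
      by blast
    moreover have "T (const_bcontfun 1) s = c"
      using calculation(2)[of "const_bcontfun 1"] by simp
    ultimately show ?weighted
      by auto
  next
    assume weighted: ?weighted
    then have "T (const_bcontfun 1) s = 1 \<or> T (const_bcontfun 1) s = -1"
      by linarith
    with weighted show "\<exists>c. (c = 1 \<or> c = -1) \<and> (\<forall>g. T g s = c * g k)"
      by blast
  qed
  finally show ?thesis .
qed

lemma U_embedding_pm_dirac_point_unique:
  fixes T :: "('k::topological_space \<Rightarrow>\<^sub>C real) \<Rightarrow>\<^sub>L ('s::t2_space \<Rightarrow>\<^sub>C real)"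
  assumes cS: "compact (UNIV::'s set)" and U: "U_embedding T"
    and "F_T T s = dirac k \<or> F_T T s = - dirac k"
    and "F_T T s' = dirac k \<or> F_T T s' = - dirac k"
  shows "s = s'"
proof -
  have "\<exists>c. \<bar>c\<bar> = 1 \<and> adjoint_op T (c *\<^sub>R dirac t) = dirac k"
    if "F_T T t = dirac k \<or> F_T T t = - dirac k" for t
  proof -
    define c :: real where "c = (if F_T T t = dirac k then 1 else -1)"
    have "c * c = 1" "\<bar>c\<bar> = 1"
      by (simp_all add: c_def)
    moreover have "F_T T t = c *\<^sub>R dirac k"
      using that by (auto simp: c_def)
    ultimately have "adjoint_op T (c *\<^sub>R dirac t) = dirac k"
      by (simp add: adjoint_op_scaleR F_T_def)
    with \<open>\<bar>c\<bar> = 1\<close> show ?thesis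
      by blast
  qed
  then obtain c c' where c: "\<bar>c\<bar> = 1" "adjoint_op T (c *\<^sub>R dirac s) = dirac k"
    and c': "\<bar>c'\<bar> = 1" "adjoint_op T (c' *\<^sub>R dirac s') = dirac k"
    using assms(3,4) by metis
  then have "c *\<^sub>R dirac s = c' *\<^sub>R dirac s'"
    by (intro U_embedding_unique_norm_preserving_preimage[OF U]) simp_all
  then show ?thesis
    using scaleR_dirac_eq_imp_eq[OF cS] c(1) by fastforce
qed

lemma continuous_on_closed_graph_compact:
  fixes f :: "'a::topological_space \<Rightarrow> 'b::topological_space"
  assumes "compact (UNIV::'b set)" and "closed (range (\<lambda>x. (x, f x)))"
  shows "continuous_on UNIV f"
  unfolding continuous_on_closed_vimage[OF closed_UNIV]
proof (intro allI impI)
  fix B :: "'b set"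
  assume "closed B"
  have "closed_map (prod_topology (euclidean::'a topology) (euclidean::'b topology)) euclidean fst"
    by (rule closed_map_fst) (use assms(1) in \<open>simp add: compact_space_def\<close>)
  moreover have "closed (range (\<lambda>x. (x, f x)) \<inter> UNIV \<times> B)"
    by (intro closed_Int assms(2) closed_Times closed_UNIV \<open>closed B\<close>)
  ultimately have "closed (fst ` (range (\<lambda>x. (x, f x)) \<inter> UNIV \<times> B))"
    unfolding closed_map_def by simp
  moreover have "fst ` (range (\<lambda>x. (x, f x)) \<inter> UNIV \<times> B) = f -` B \<inter> UNIV"
    by force
  ultimately show "closed (f -` B \<inter> UNIV)"
    by simp
qed

lemma U_embedding_core_parametrization:
  fixes T :: "('k::topological_space \<Rightarrow>\<^sub>C real) \<Rightarrow>\<^sub>L ('s::t2_space \<Rightarrow>\<^sub>C real)"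
  assumes cS: "compact (UNIV::'s set)" and U: "U_embedding T"
  obtains \<sigma> where "continuous_on UNIV \<sigma>"
    "\<And>k. F_T T (\<sigma> k) = dirac k \<or> F_T T (\<sigma> k) = - dirac k" "U_core T = range \<sigma>"
proof -
  define P where "P k s \<longleftrightarrow> F_T T s = dirac k \<or> F_T T s = - dirac k" for k s
  have "linear_isometry T"
    using U by (simp add: U_embedding_def)
  then have "\<exists>s. P k s" for k
    using linear_isometry_weighted_point[OF cS] unfolding P_def F_T_eq_pm_dirac_iff by metis
  moreover have "s = s'" if "P k s" "P k s'" for k s s'
    using U_embedding_pm_dirac_point_unique[OF cS U] that unfolding P_def by blast
  ultimately have ex1: "\<exists>!s. P k s" for k
    by blast
  define \<sigma> where "\<sigma> k = (THE s. P k s)" for k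
  have P_iff: "P k s \<longleftrightarrow> s = \<sigma> k" for k s
    unfolding \<sigma>_def using ex1 the1_equality theI' by metis
  have "closed {z. P (fst z) (snd z)}"
    unfolding P_def F_T_eq_pm_dirac_iff
    by (intro closed_Collect_conj closed_Collect_all closed_Collect_eq continuous_intros)
  moreover have "{z. P (fst z) (snd z)} = range (\<lambda>k. (k, \<sigma> k))"
    using P_iff by auto
  ultimately have "continuous_on UNIV \<sigma>"
    using continuous_on_closed_graph_compact[OF cS] by simp
  moreover have "U_core T = range \<sigma>"
    using P_iff unfolding U_core_def P_def by auto
  ultimately show ?thesis
    using that P_iff unfolding P_def by blast
qed

text \<open>Only meaningful for continuous \<open>w\<close> and \<open>\<sigma>\<close> with \<open>w\<close> bounded (the hypotheses of the
  context below); otherwise \<open>Bcontfun\<close> and \<open>Blinfun\<close> return unspecified values.\<close>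

definition weighted_composition ::
  "('a::topological_space \<Rightarrow> real) \<Rightarrow> ('a \<Rightarrow> 'b::topological_space) \<Rightarrow> ('b \<Rightarrow>\<^sub>C real) \<Rightarrow>\<^sub>L ('a \<Rightarrow>\<^sub>C real)"
  where "weighted_composition w \<sigma> = Blinfun (\<lambda>g :: 'b \<Rightarrow>\<^sub>C real. Bcontfun (\<lambda>k. w k * g (\<sigma> k)))"

context
  fixes w :: "'a::topological_space \<Rightarrow> real" and \<sigma> :: "'a \<Rightarrow> 'b::topological_space" and B :: real
  assumes w: "continuous_on UNIV w" "\<And>k. \<bar>w k\<bar> \<le> B" and \<sigma>: "continuous_on UNIV \<sigma>"
begin

private lemma apply_Bcontfun_weighted:
  fixes g :: "'b \<Rightarrow>\<^sub>C real"
  shows "apply_bcontfun (Bcontfun (\<lambda>k. w k * g (\<sigma> k))) = (\<lambda>k. w k * g (\<sigma> k))"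
proof (rule apply_Bcontfun_bounded[of _ "B * norm g"])
  show "continuous_on UNIV (\<lambda>k. w k * g (\<sigma> k))"
    by (intro continuous_intros w(1) \<sigma>)
  show "norm (w k * g (\<sigma> k)) \<le> B * norm g" for k
    using w(2)[of k] norm_bounded[of g "\<sigma> k"] by (simp add: abs_mult mult_mono)
qed

private lemma norm_Bcontfun_weighted_le:
  fixes g :: "'b \<Rightarrow>\<^sub>C real"
  shows "norm (Bcontfun (\<lambda>k. w k * g (\<sigma> k))) \<le> B * norm g"
proof (rule norm_bound)
  show "norm (Bcontfun (\<lambda>k. w k * g (\<sigma> k)) k) \<le> B * norm g" for k
    using w(2)[of k] norm_bounded[of g "\<sigma> k"] by (simp add: apply_Bcontfun_weighted abs_mult mult_mono)
qed

private lemma bounded_linear_weighted: "bounded_linear (\<lambda>g :: 'b \<Rightarrow>\<^sub>C real. Bcontfun (\<lambda>k. w k * g (\<sigma> k)))"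
proof (rule bounded_linear_intro[where K=B])
  show "Bcontfun (\<lambda>k. w k * (x + y) (\<sigma> k)) =
      Bcontfun (\<lambda>k. w k * x (\<sigma> k)) + Bcontfun (\<lambda>k. w k * y (\<sigma> k))" for x y :: "'b \<Rightarrow>\<^sub>C real"
    by (rule bcontfun_eqI) (unfold apply_Bcontfun_weighted, simp add: distrib_left apply_Bcontfun_weighted)
  show "Bcontfun (\<lambda>k. w k * (r *\<^sub>R x) (\<sigma> k)) = r *\<^sub>R Bcontfun (\<lambda>k. w k * x (\<sigma> k))"
    for r and x :: "'b \<Rightarrow>\<^sub>C real"
    by (rule bcontfun_eqI) (unfold apply_Bcontfun_weighted, simp add: mult.left_commute apply_Bcontfun_weighted)
  show "norm (Bcontfun (\<lambda>k. w k * x (\<sigma> k))) \<le> norm x * B" for x :: "'b \<Rightarrow>\<^sub>C real"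
    using norm_Bcontfun_weighted_le[of x] by (simp add: mult.commute)
qed

lemma weighted_composition_apply:
  fixes g :: "'b \<Rightarrow>\<^sub>C real"
  shows "weighted_composition w \<sigma> g k = w k * g (\<sigma> k)"
  by (simp add: weighted_composition_def bounded_linear_Blinfun_apply[OF bounded_linear_weighted]
      apply_Bcontfun_weighted)

lemma norm_weighted_composition_le: "norm (weighted_composition w \<sigma>) \<le> B"
proof (rule norm_blinfun_bound)
  show "0 \<le> B"
    using w(2) abs_ge_zero order_trans by blast
  show "norm (weighted_composition w \<sigma> g) \<le> B * norm g" for g :: "'b \<Rightarrow>\<^sub>C real"
    using norm_Bcontfun_weighted_le[of g]
    by (simp add: weighted_composition_def bounded_linear_Blinfun_apply[OF bounded_linear_weighted])
qed

end

lemma U_embedding_left_inverse_supported_on_core: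
  fixes T :: "('k::topological_space \<Rightarrow>\<^sub>C real) \<Rightarrow>\<^sub>L ('s::t2_space \<Rightarrow>\<^sub>C real)"
  assumes cS: "compact (UNIV::'s set)" and U: "U_embedding T"
  obtains L :: "('s \<Rightarrow>\<^sub>C real) \<Rightarrow>\<^sub>L ('k \<Rightarrow>\<^sub>C real)" where "norm L \<le> 1" "\<And>f. L (T f) = f"
    "\<And>g. (\<And>s. s \<in> U_core T \<Longrightarrow> (g :: 's \<Rightarrow>\<^sub>C real) s = 0) \<Longrightarrow> L g = 0"
proof -
  obtain \<sigma> where \<sigma>: "continuous_on UNIV \<sigma>"
    "\<And>k. F_T T (\<sigma> k) = dirac k \<or> F_T T (\<sigma> k) = - dirac k" "U_core T = range \<sigma>"
    using U_embedding_core_parametrization[OF cS U] by blast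
  define \<epsilon> where "\<epsilon> k = T (const_bcontfun 1) (\<sigma> k)" for k
  have \<epsilon>: "\<bar>\<epsilon> k\<bar> = 1" "T g (\<sigma> k) = \<epsilon> k * g k" for k g
    using \<sigma>(2)[of k] unfolding F_T_eq_pm_dirac_iff \<epsilon>_def by blast+
  have "continuous_on UNIV \<epsilon>"
    unfolding \<epsilon>_def by (intro continuous_intros \<sigma>(1))
  then have L: "weighted_composition \<epsilon> \<sigma> g k = \<epsilon> k * g (\<sigma> k)"
    and "norm (weighted_composition \<epsilon> \<sigma>) \<le> 1" for g :: "'s \<Rightarrow>\<^sub>C real" and k
    using weighted_composition_apply norm_weighted_composition_le \<sigma>(1) \<epsilon>(1) by (metis order_refl)+
  moreover have "weighted_composition \<epsilon> \<sigma> (T f) = f" for f :: "'k \<Rightarrow>\<^sub>C real"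
  proof (rule bcontfun_eqI)
    fix k
    have "\<epsilon> k * \<epsilon> k = 1"
      using \<epsilon>(1)[of k] by (metis abs_mult_self_eq mult_1_right)
    then show "weighted_composition \<epsilon> \<sigma> (T f) k = f k"
      by (simp add: L \<epsilon>(2) mult.assoc[symmetric])
  qed
  moreover have "weighted_composition \<epsilon> \<sigma> g = 0" if "\<And>s. s \<in> U_core T \<Longrightarrow> g s = 0"
    for g :: "'s \<Rightarrow>\<^sub>C real"
    by (rule bcontfun_eqI) (simp add: L that \<sigma>(3))
  ultimately show ?thesis
    using that by blast
qed

lemma closed_U_core:
  fixes T :: "('k::topological_space \<Rightarrow>\<^sub>C real) \<Rightarrow>\<^sub>L ('s::t2_space \<Rightarrow>\<^sub>C real)"
  assumes "compact (UNIV::'k set)" "compact (UNIV::'s set)" "U_embedding T"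
  shows "closed (U_core T)"
proof -
  obtain \<sigma> where "continuous_on UNIV \<sigma>"
    "\<And>k. F_T T (\<sigma> k) = dirac k \<or> F_T T (\<sigma> k) = - dirac k" "U_core T = range \<sigma>"
    using U_embedding_core_parametrization[OF assms(2,3)] by blast
  then show ?thesis
    using assms(1) by (simp add: compact_continuous_image compact_imp_closed)
qed

lemma U_core_eq_norm_ge_one:
  fixes T :: "('k::topological_space \<Rightarrow>\<^sub>C real) \<Rightarrow>\<^sub>L ('s::t2_space \<Rightarrow>\<^sub>C real)"
  assumes cK: "compact (UNIV::'k set)" and cS: "compact (UNIV::'s set)" and U: "U_embedding T"
  shows "U_core T = {s. 1 \<le> norm (F_T T s)}"
proof (intro set_eqI iffI)
  fix s
  assume "s \<in> U_core T"
  then show "s \<in> {s. 1 \<le> norm (F_T T s)}"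
    by (auto simp: U_core_def)
next
  fix p
  assume p: "p \<in> {s. 1 \<le> norm (F_T T s)}"
  obtain L :: "('s \<Rightarrow>\<^sub>C real) \<Rightarrow>\<^sub>L ('k \<Rightarrow>\<^sub>C real)" where L: "norm L \<le> 1" "\<And>f. L (T f) = f"
    "\<And>g. (\<And>s. s \<in> U_core T \<Longrightarrow> (g :: 's \<Rightarrow>\<^sub>C real) s = 0) \<Longrightarrow> L g = 0"
    using U_embedding_left_inverse_supported_on_core[OF cS U] by blast
  have "norm (F_T T p) \<le> 1"
    using norm_adjoint_op_le[of T "dirac p"] U by (simp add: U_embedding_def F_T_def)
  with p have "norm (dirac p) = norm (adjoint_op T (dirac p))"
    by (simp add: F_T_def)
  then have dirac_eq: "dirac p = F_T T p o\<^sub>L L"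
    unfolding F_T_def by (rule U_embedding_eq_compose_left_inverse[OF U L(2) L(1)])
  show "p \<in> U_core T"
  proof (rule ccontr)
    assume "p \<notin> U_core T"
    then obtain g :: "'s \<Rightarrow>\<^sub>C real" where "g p = 1" "\<And>s. s \<in> U_core T \<Longrightarrow> g s = 0"
      using compact_t2_separating_bcontfun[OF cS closed_U_core[OF cK cS U]] by metis
    with arg_cong[OF dirac_eq, of "\<lambda>y. y g"] L(3) show False
      by simp
  qed
qed

theorem corollary6p21:
  fixes T :: "('k::t2_space \<Rightarrow>\<^sub>C real) \<Rightarrow>\<^sub>L ('s::t2_space \<Rightarrow>\<^sub>C real)"
  assumes "compact (UNIV :: 'k set)" and "compact (UNIV :: 's set)"
    and "U_embedding T"
  shows "zero_set (U_core T) \<and> gdelta_in euclidean (U_core T)"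
proof -
  have gdelta: "gdelta_in euclidean (U_core T)"
    unfolding U_core_eq_norm_ge_one[OF assms] by (rule gdelta_norm_ge_blinfun) simp
  have "zero_set (U_core T)"
    using normal_space_compact_t2[OF assms(2)] closed_U_core[OF assms] gdelta
    by (rule closed_gdelta_imp_zero_set)
  with gdelta show ?thesis
    by blast
qed

end
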